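(* Let $G$ be a finite group. Every irreducible NIM-rep $(A,M)$ of the Tambara–Yamagami fusion ring $K(G,0)$ has basis $M$ consisting of at most two $G$-orbits.
   Context: The near-group fusion ring $K(G,\alpha)$ is the free $\mathbb{Z}$-module with basis $G\cup\{X\}$, with multiplication given by the group law on $G$, $gX=Xg=X$ for $g\in G$, and $X^2=\sum_{g\in G}g+\alpha X$; involution $g^*=g^{-1}$, $X^*=X$; $K(G,0)$ is the Tambara–Yamagami fusion ring. A NIM-rep of a fusion ring $(R,B)$ is a nonzero left $R$-module $A$ which is a free $\mathbb{Z}$-module with a fixed finite basis $M$, such that each $b\vartriangleright m$ is a non-negative integer combination of elements of $M$, and $(b\vartriangleright m,m')=(m,b^*\vartriangleright m')$ for the form making $M$ orthonormal. The elements of $G$ permute $M$, and the $G$-orbits partition $M$. A NIM-rep is irreducible if no proper nonempty subset of $M$ spans an $R$-submodule. *)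

theory Defs
  imports "HOL-Algebra.Group"
begin

text \<open>Basis of the near-group fusion ring K(G,alpha): Some g for g in G, None for X.\<close>

definition ng_basis :: "('g, 'z) monoid_scheme \<Rightarrow> 'g option set" where
  "ng_basis G = insert None (Some ` carrier G)"

text \<open>Structure constants N_{b c}^d of K(G,alpha): b c = sum_d N b c d * d.\<close>

definition ng_coeff :: "('g, 'z) monoid_scheme \<Rightarrow> nat \<Rightarrow> 'g option \<Rightarrow> 'g option \<Rightarrow> 'g option \<Rightarrow> nat" where
  "ng_coeff G \<alpha> b c d =
     (case (b, c) of
        (Some g, Some h) \<Rightarrow> (if d = Some (g \<otimes>\<^bsub>G\<^esub> h) then 1 else 0)
      | (Some g, None) \<Rightarrow> (if d = None then 1 else 0)
      | (None, Some h) \<Rightarrow> (if d = None then 1 else 0)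
      | (None, None) \<Rightarrow> (case d of None \<Rightarrow> \<alpha> | Some _ \<Rightarrow> 1))"

definition ng_dual :: "('g, 'z) monoid_scheme \<Rightarrow> 'g option \<Rightarrow> 'g option" where
  "ng_dual G b = (case b of None \<Rightarrow> None | Some g \<Rightarrow> Some (inv\<^bsub>G\<^esub> g))"

text \<open>A NIM-rep of K(G,alpha) with finite basis M: act b m m' is the (non-negative integer)
  coefficient of m' in b acting on m.\<close>

definition ng_nimrep ::
  "('g, 'z) monoid_scheme \<Rightarrow> nat \<Rightarrow> 'm set \<Rightarrow> ('g option \<Rightarrow> 'm \<Rightarrow> 'm \<Rightarrow> nat) \<Rightarrow> bool" where
  "ng_nimrep G \<alpha> M act \<longleftrightarrow>
     finite M \<and> M \<noteq> {} \<and>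
     (\<forall>m\<in>M. \<forall>m'\<in>M. act (Some \<one>\<^bsub>G\<^esub>) m m' = (if m = m' then 1 else 0)) \<and>
     (\<forall>b\<in>ng_basis G. \<forall>c\<in>ng_basis G. \<forall>m\<in>M. \<forall>m'\<in>M.
        (\<Sum>m''\<in>M. act c m m'' * act b m'' m') =
        (\<Sum>d\<in>ng_basis G. ng_coeff G \<alpha> b c d * act d m m')) \<and>
     (\<forall>b\<in>ng_basis G. \<forall>m\<in>M. \<forall>m'\<in>M. act b m m' = act (ng_dual G b) m' m)"

text \<open>S spans an R-submodule iff b acting on any m in S is supported in S.\<close>

definition ng_closed ::
  "('g, 'z) monoid_scheme \<Rightarrow> 'm set \<Rightarrow> ('g option \<Rightarrow> 'm \<Rightarrow> 'm \<Rightarrow> nat) \<Rightarrow> 'm set \<Rightarrow> bool" where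
  "ng_closed G M act S \<longleftrightarrow>
     (\<forall>b\<in>ng_basis G. \<forall>m\<in>S. \<forall>m'\<in>M. act b m m' \<noteq> 0 \<longrightarrow> m' \<in> S)"

definition ng_irreducible ::
  "('g, 'z) monoid_scheme \<Rightarrow> nat \<Rightarrow> 'm set \<Rightarrow> ('g option \<Rightarrow> 'm \<Rightarrow> 'm \<Rightarrow> nat) \<Rightarrow> bool" where
  "ng_irreducible G \<alpha> M act \<longleftrightarrow> ng_nimrep G \<alpha> M act \<and>
     (\<forall>S. S \<subseteq> M \<and> S \<noteq> {} \<and> S \<noteq> M \<longrightarrow> \<not> ng_closed G M act S)"

definition ng_orbit ::
  "('g, 'z) monoid_scheme \<Rightarrow> 'm set \<Rightarrow> ('g option \<Rightarrow> 'm \<Rightarrow> 'm \<Rightarrow> nat) \<Rightarrow> 'm \<Rightarrow> 'm set" where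
  "ng_orbit G M act m = {m'\<in>M. \<exists>g\<in>carrier G. act (Some g) m m' \<noteq> 0}"

end

theory Submission
  imports Defs
begin

text \<open>
  Write \<open>a \<sim> b\<close> when \<open>b\<close> lies in the \<open>G\<close>-orbit of \<open>a\<close> and \<open>a \<frown> b\<close> when \<open>b\<close> occurs in
  \<open>X \<rhd> a\<close>. Since all coefficients are non-negative, a nonzero path \<open>a \<rightarrow> b \<rightarrow> c\<close> through two
  basis elements of the ring forces \<open>c\<close> to occur in the action of their product on \<open>a\<close>.
  The fusion rules \<open>gh \<in> G\<close>, \<open>gX = Xg = X\<close> and, for \<open>\<alpha> = 0\<close>, \<open>X\<^sup>2 = \<Sum>g\<close> thus give:
  \<open>\<sim>\<close> is an equivalence, \<open>\<frown>\<close> is symmetric and compatible with \<open>\<sim>\<close> on both sides, and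
  \<open>a \<frown> b \<frown> c\<close> implies \<open>a \<sim> c\<close>. Hence the orbit of any \<open>m\<close> together with the
  \<open>X\<close>-neighbours of \<open>m\<close> spans a submodule, which by irreducibility is everything, and all
  \<open>X\<close>-neighbours of \<open>m\<close> lie in a single orbit.
\<close>

lemma finite_ng_basis: "finite (carrier G) \<Longrightarrow> finite (ng_basis G)"
  by (simp add: ng_basis_def)

lemma Some_in_ng_basis [simp]: "Some g \<in> ng_basis G \<longleftrightarrow> g \<in> carrier G"
  and None_in_ng_basis [simp]: "None \<in> ng_basis G"
  by (auto simp: ng_basis_def)

lemma ng_coeff_sum_Some_Some:
  assumes "finite (carrier G)" "g \<otimes>\<^bsub>G\<^esub> h \<in> carrier G"
  shows "(\<Sum>d\<in>ng_basis G. ng_coeff G \<alpha> (Some g) (Some h) d * f d) = f (Some (g \<otimes>\<^bsub>G\<^esub> h))"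
proof -
  have "(\<Sum>d\<in>ng_basis G. ng_coeff G \<alpha> (Some g) (Some h) d * f d)
      = (\<Sum>d\<in>ng_basis G. if d = Some (g \<otimes>\<^bsub>G\<^esub> h) then f d else 0)"
    by (rule sum.cong) (auto simp: ng_coeff_def)
  then show ?thesis
    using assms by (simp add: finite_ng_basis)
qed

lemma ng_coeff_sum_Some_None:
  assumes "finite (carrier G)"
  shows "(\<Sum>d\<in>ng_basis G. ng_coeff G \<alpha> (Some g) None d * f d) = f None"
proof -
  have "(\<Sum>d\<in>ng_basis G. ng_coeff G \<alpha> (Some g) None d * f d)
      = (\<Sum>d\<in>ng_basis G. if d = None then f d else 0)"
    by (rule sum.cong) (auto simp: ng_coeff_def)
  then show ?thesis
    using assms by (simp add: finite_ng_basis)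
qed

lemma ng_coeff_sum_None_Some:
  assumes "finite (carrier G)"
  shows "(\<Sum>d\<in>ng_basis G. ng_coeff G \<alpha> None (Some g) d * f d) = f None"
proof -
  have "(\<Sum>d\<in>ng_basis G. ng_coeff G \<alpha> None (Some g) d * f d)
      = (\<Sum>d\<in>ng_basis G. if d = None then f d else 0)"
    by (rule sum.cong) (auto simp: ng_coeff_def)
  then show ?thesis
    using assms by (simp add: finite_ng_basis)
qed

lemma ng_coeff_sum_None_None:
  assumes "finite (carrier G)"
  shows "(\<Sum>d\<in>ng_basis G. ng_coeff G \<alpha> None None d * f d) = (\<Sum>g\<in>carrier G. f (Some g)) + \<alpha> * f None"
proof -
  have "(\<Sum>d\<in>Some ` carrier G. ng_coeff G \<alpha> None None d * f d) = (\<Sum>d\<in>Some ` carrier G. f d)"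
    by (rule sum.cong) (auto simp: ng_coeff_def)
  then show ?thesis
    using assms by (simp add: ng_basis_def ng_coeff_def sum.reindex)
qed

locale near_group_nimrep = group G for G :: "('g, 'z) monoid_scheme" (structure) +
  fixes \<alpha> :: nat and M :: "'m set" and act :: "'g option \<Rightarrow> 'm \<Rightarrow> 'm \<Rightarrow> nat"
  assumes finite_carrier: "finite (carrier G)"
    and nimrep: "ng_nimrep G \<alpha> M act"
begin

lemma finite_basis: "finite M"
  and act_one: "m \<in> M \<Longrightarrow> m' \<in> M \<Longrightarrow> act (Some \<one>) m m' = (if m = m' then 1 else 0)"
  and act_assoc: "b \<in> ng_basis G \<Longrightarrow> c \<in> ng_basis G \<Longrightarrow> m \<in> M \<Longrightarrow> m' \<in> M \<Longrightarrow>
    (\<Sum>m''\<in>M. act c m m'' * act b m'' m') = (\<Sum>d\<in>ng_basis G. ng_coeff G \<alpha> b c d * act d m m')"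
  and act_dual: "b \<in> ng_basis G \<Longrightarrow> m \<in> M \<Longrightarrow> m' \<in> M \<Longrightarrow> act b m m' = act (ng_dual G b) m' m"
  using nimrep unfolding ng_nimrep_def by blast+

lemma act_comp_nonzero:
  assumes "b \<in> ng_basis G" "c \<in> ng_basis G" "m \<in> M" "m'' \<in> M" "m' \<in> M"
    and "act c m m'' \<noteq> 0" "act b m'' m' \<noteq> 0"
  shows "(\<Sum>d\<in>ng_basis G. ng_coeff G \<alpha> b c d * act d m m') \<noteq> 0"
  using assms finite_basis by (auto simp flip: act_assoc)

lemma in_orbit_iff: "m' \<in> ng_orbit G M act m \<longleftrightarrow> m' \<in> M \<and> (\<exists>g\<in>carrier G. act (Some g) m m' \<noteq> 0)"
  by (simp add: ng_orbit_def)

lemma orbit_refl: "m \<in> M \<Longrightarrow> m \<in> ng_orbit G M act m"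
  by (auto simp: in_orbit_iff act_one intro!: bexI[of _ \<one>])

lemma orbit_sym:
  assumes "m \<in> M" "m' \<in> ng_orbit G M act m"
  shows "m \<in> ng_orbit G M act m'"
proof -
  obtain g where "g \<in> carrier G" "act (Some g) m m' \<noteq> 0" "m' \<in> M"
    using assms(2) by (auto simp: in_orbit_iff)
  then show ?thesis
    using assms(1) by (auto simp: in_orbit_iff act_dual[of "Some g"] ng_dual_def)
qed

lemma orbit_trans:
  assumes "m \<in> M" "m' \<in> ng_orbit G M act m" "m'' \<in> ng_orbit G M act m'"
  shows "m'' \<in> ng_orbit G M act m"
proof -
  obtain h g where "h \<in> carrier G" "act (Some h) m m' \<noteq> 0" "m' \<in> M"
    and "g \<in> carrier G" "act (Some g) m' m'' \<noteq> 0" "m'' \<in> M"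
    using assms(2,3) by (auto simp: in_orbit_iff)
  then have "act (Some (g \<otimes> h)) m m'' \<noteq> 0"
    using act_comp_nonzero[of "Some g" "Some h" m m' m''] assms(1)
    by (simp add: ng_coeff_sum_Some_Some finite_carrier)
  with \<open>g \<in> carrier G\<close> \<open>h \<in> carrier G\<close> \<open>m'' \<in> M\<close> show ?thesis
    by (auto simp: in_orbit_iff)
qed

lemma orbit_eq:
  assumes "m \<in> M" "m' \<in> ng_orbit G M act m"
  shows "ng_orbit G M act m' = ng_orbit G M act m"
proof -
  have "m' \<in> M" "m \<in> ng_orbit G M act m'"
    using assms orbit_sym by (auto simp: in_orbit_iff)
  then show ?thesis
    using assms orbit_trans by blast
qed

lemma act_X_sym: "m \<in> M \<Longrightarrow> m' \<in> M \<Longrightarrow> act None m m' = act None m' m"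
  using act_dual[of None m m'] by (simp add: ng_dual_def)

lemma act_X_orbit_left:
  assumes "m \<in> M" "m' \<in> ng_orbit G M act m" "m'' \<in> M" "act None m' m'' \<noteq> 0"
  shows "act None m m'' \<noteq> 0"
proof -
  obtain g where "g \<in> carrier G" "act (Some g) m m' \<noteq> 0" "m' \<in> M"
    using assms(2) by (auto simp: in_orbit_iff)
  then show ?thesis
    using act_comp_nonzero[of None "Some g" m m' m''] assms
    by (simp add: ng_coeff_sum_None_Some finite_carrier)
qed

lemma act_X_orbit_right:
  assumes "m \<in> M" "m' \<in> M" "act None m m' \<noteq> 0" "m'' \<in> ng_orbit G M act m'"
  shows "act None m m'' \<noteq> 0"
proof -
  obtain g where "g \<in> carrier G" "act (Some g) m' m'' \<noteq> 0" "m'' \<in> M"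
    using assms(4) by (auto simp: in_orbit_iff)
  then show ?thesis
    using act_comp_nonzero[of "Some g" None m m' m''] assms
    by (simp add: ng_coeff_sum_Some_None finite_carrier)
qed

lemma act_X_X_in_orbit:
  assumes "\<alpha> = 0" "m \<in> M" "m' \<in> M" "m'' \<in> M"
    and "act None m m' \<noteq> 0" "act None m' m'' \<noteq> 0"
  shows "m'' \<in> ng_orbit G M act m"
proof -
  have "(\<Sum>g\<in>carrier G. act (Some g) m m'') \<noteq> 0"
    using act_comp_nonzero[of None None m m' m''] assms
    by (simp add: ng_coeff_sum_None_None finite_carrier)
  then obtain g where "g \<in> carrier G" "act (Some g) m m'' \<noteq> 0"
    by (meson sum.neutral)
  with \<open>m'' \<in> M\<close> show ?thesis
    by (auto simp: in_orbit_iff)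
qed

lemma ng_closed_orbit_Un_X_neighbours:
  assumes "\<alpha> = 0" "m \<in> M"
  shows "ng_closed G M act (ng_orbit G M act m \<union> {m'\<in>M. act None m m' \<noteq> 0})"
  unfolding ng_closed_def
proof (intro ballI impI)
  fix b n n'
  assume b: "b \<in> ng_basis G" and n: "n \<in> ng_orbit G M act m \<union> {m'\<in>M. act None m m' \<noteq> 0}"
    and "n' \<in> M" and nz: "act b n n' \<noteq> 0"
  have "n \<in> M"
    using n by (auto simp: in_orbit_iff)
  from n consider (orbit) "n \<in> ng_orbit G M act m" | (X) "act None m n \<noteq> 0"
    by blast
  note cases_b = option.exhaust[of b, case_product this]
  then show "n' \<in> ng_orbit G M act m \<union> {m'\<in>M. act None m m' \<noteq> 0}"
  proof cases
    case None_orbit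
    then have "act None m n' \<noteq> 0"
      using act_X_orbit_left[OF \<open>m \<in> M\<close> _ \<open>n' \<in> M\<close>] nz by simp
    with \<open>n' \<in> M\<close> show ?thesis by simp
  next
    case None_X
    then have "n' \<in> ng_orbit G M act m"
      using act_X_X_in_orbit[OF assms \<open>n \<in> M\<close> \<open>n' \<in> M\<close>] nz by simp
    then show ?thesis by simp
  next
    case (Some_orbit g)
    with b nz \<open>n' \<in> M\<close> have "n' \<in> ng_orbit G M act n"
      by (auto simp: in_orbit_iff)
    with Some_orbit show ?thesis
      using orbit_trans[OF \<open>m \<in> M\<close>] by simp
  next
    case (Some_X g)
    with b nz \<open>n' \<in> M\<close> have "n' \<in> ng_orbit G M act n"
      by (auto simp: in_orbit_iff)
    with Some_X \<open>n' \<in> M\<close> show ?thesis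
      using act_X_orbit_right[OF \<open>m \<in> M\<close> \<open>n \<in> M\<close>] by simp
  qed
qed

lemma card_orbits_le_2:
  assumes "\<alpha> = 0" and irred: "ng_irreducible G \<alpha> M act"
  shows "card (ng_orbit G M act ` M) \<le> 2"
proof -
  obtain m where "m \<in> M"
    using nimrep by (auto simp: ng_nimrep_def)
  define N where "N = {m'\<in>M. act None m m' \<noteq> 0}"
  have "ng_orbit G M act m \<union> N \<subseteq> M" "m \<in> ng_orbit G M act m \<union> N"
    using orbit_refl[OF \<open>m \<in> M\<close>] by (auto simp: N_def in_orbit_iff)
  moreover have "ng_closed G M act (ng_orbit G M act m \<union> N)"
    unfolding N_def by (rule ng_closed_orbit_Un_X_neighbours[OF assms(1) \<open>m \<in> M\<close>])
  ultimately have "ng_orbit G M act m \<union> N = M"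
    using irred unfolding ng_irreducible_def by blast
  then have orbits_sub: "ng_orbit G M act ` M \<subseteq> insert (ng_orbit G M act m) (ng_orbit G M act ` N)"
    using orbit_eq[OF \<open>m \<in> M\<close>] by auto
  have finite_orbits_N: "finite (ng_orbit G M act ` N)"
    using finite_basis by (simp add: N_def)
  have "ng_orbit G M act n' = ng_orbit G M act n" if "n \<in> N" "n' \<in> N" for n n'
  proof -
    have "n \<in> M" "n' \<in> M" "act None n m \<noteq> 0" "act None m n' \<noteq> 0"
      using that act_X_sym[OF \<open>m \<in> M\<close>, of n] unfolding N_def by auto
    then show ?thesis
      using orbit_eq[OF \<open>n \<in> M\<close> act_X_X_in_orbit[OF assms(1) \<open>n \<in> M\<close> \<open>m \<in> M\<close> \<open>n' \<in> M\<close>]] by simp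
  qed
  then have "card (ng_orbit G M act ` N) \<le> Suc 0"
    unfolding card_le_Suc0_iff_eq[OF finite_orbits_N] by blast
  then have "card (insert (ng_orbit G M act m) (ng_orbit G M act ` N)) \<le> 2"
    by (intro card_insert_le_m1) simp_all
  then show ?thesis
    using card_mono[OF _ orbits_sub] finite_orbits_N by simp
qed

end

theorem corollary3p16:
  fixes G :: "('g, 'z) monoid_scheme"
    and M :: "'m set"
    and act :: "'g option \<Rightarrow> 'm \<Rightarrow> 'm \<Rightarrow> nat"
  assumes "group G" and "finite (carrier G)"
    and "ng_irreducible G 0 M act"
  shows "card (ng_orbit G M act ` M) \<le> 2"
proof -
  interpret near_group_nimrep G 0 M act
    using assms by (simp add: near_group_nimrep_def near_group_nimrep_axioms_def ng_irreducible_def)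
  show ?thesis
    using card_orbits_le_2 assms(3) by simp
qed

end
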